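(* Let $q\ge2$, let $\mathbf{u}$ be a probability distribution on $[1:q]$, and let $a\ne b\in[1:q]$. Then for all sufficiently large $n$: $D_{ab}(M_{n,\mathbf{u}})=2$ if $a\notin\mathrm{supp}(\mathbf{u})$ or $b\notin\mathrm{supp}(\mathbf{u})$, and $D_{ab}(M_{n,\mathbf{u}})\le \frac{C_1(\log n)^{(|\mathrm{supp}(\mathbf{u})|-2)/2}}{\sqrt n}$ if $a,b\in\mathrm{supp}(\mathbf{u})$, where $C_1$ is a constant independent of $n$. In particular, if $\mathbf{u}$ has strictly positive entries, then $D_{ab}(M_{n,\mathbf{u}})\le \frac{C_1(\log n)^{(q-2)/2}}{\sqrt n}$ for every $a\ne b$.
   Context: $\mathcal{N}_{q,n}=\{\mathbf{t}\in\mathbb{Z}_{\ge0}^q:\sum_it_i=n\}$. The multinomial distribution is $M_{n,\mathbf{u}}(\mathbf{t})=\frac{n!}{t_1!\cdots t_q!}\prod_iu_i^{t_i}$ for $\mathbf{t}\in\mathcal{N}_{q,n}$ (with $0^0=1$). $\mathrm{supp}(\mathbf{u})=\{i:u_i>0\}$. $\mathbf{e}_c$ is the $c$-th standard unit vector in $\mathbb{Z}^q$. For a distribution $Q$ on $\mathcal{N}_{q,n}$ and $a\ne b$, $D_{ab}(Q)=\sum_{\mathbf{t}\in\mathcal{N}_{q,n+1}}|Q(\mathbf{t}-\mathbf{e}_b)-Q(\mathbf{t}-\mathbf{e}_a)|$, where $Q(\mathbf{s})=0$ whenever $\mathbf{s}\notin\mathcal{N}_{q,n}$ (some coordinate outside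 $[0:n]$). Logarithms base 2. *)

theory Defs
  imports "HOL-Analysis.Analysis"
begin

text \<open>Vectors in Z_{>=0}^q are functions nat => nat indexed by [1:q], zero outside.\<close>

definition Nset :: "nat \<Rightarrow> nat \<Rightarrow> (nat \<Rightarrow> nat) set" where
  "Nset q n = {t. (\<forall>i. i \<notin> {1..q} \<longrightarrow> t i = 0) \<and> (\<Sum>i\<in>{1..q}. t i) = n}"

definition multinomial_dist :: "nat \<Rightarrow> nat \<Rightarrow> (nat \<Rightarrow> real) \<Rightarrow> (nat \<Rightarrow> nat) \<Rightarrow> real" where
  "multinomial_dist q n u t =
     (if t \<in> Nset q n
      then fact n / (\<Prod>i\<in>{1..q}. fact (t i)) * (\<Prod>i\<in>{1..q}. u i ^ t i)
      else 0)"

definition supp :: "nat \<Rightarrow> (nat \<Rightarrow> real) \<Rightarrow> nat set" where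
  "supp q u = {i\<in>{1..q}. u i > 0}"

text \<open>Q(t - e_c), with Q extended by 0 outside N_{q,n}.\<close>
definition shift_eval :: "nat \<Rightarrow> nat \<Rightarrow> ((nat \<Rightarrow> nat) \<Rightarrow> real) \<Rightarrow> nat \<Rightarrow> (nat \<Rightarrow> nat) \<Rightarrow> real" where
  "shift_eval q n Q c t =
     (if 1 \<le> t c \<and> t(c := t c - 1) \<in> Nset q n then Q (t(c := t c - 1)) else 0)"

definition Dab :: "nat \<Rightarrow> nat \<Rightarrow> nat \<Rightarrow> nat \<Rightarrow> ((nat \<Rightarrow> nat) \<Rightarrow> real) \<Rightarrow> real" where
  "Dab q n a b Q = (\<Sum>t\<in>Nset q (n+1). \<bar>shift_eval q n Q b t - shift_eval q n Q a t\<bar>)"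

end

theory Submission
  imports Defs
begin

text \<open>
  The identity t_c M_(n+1)(t) = (n+1) u_c M_n(t - e_c) turns D_ab(M_n) into the
  M_(n+1)-expectation of |t_b / ((n+1) u_b) - t_a / ((n+1) u_a)|. The same identity yields the
  first and second moments of the multinomial distribution, from which the square of this
  variable has expectation (1/u_a + 1/u_b) / (n+1); Cauchy-Schwarz then gives
  D_ab(M_n) \<le> sqrt ((1/u_a + 1/u_b) / (n+1)), and the logarithmic factor of the claimed bound
  is at least 1 for n \<ge> 2. If u_a = 0, every t with M_n(t - e_a) > 0 has t_a = 1 while every
  t with M_n(t - e_b) > 0 has t_a = 0, so the two shifted distributions have disjoint supports
  and D_ab = 1 + 1.
\<close>

lemma finite_Nset: "finite (Nset q n)"
proof -
  have "Nset q n \<subseteq> {t. \<forall>i. (i \<in> {1..q} \<longrightarrow> t i \<in> {0..n}) \<and> (i \<notin> {1..q} \<longrightarrow> t i = 0)}"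
  proof safe
    fix t i assume t: "t \<in> Nset q n" and i: "i \<in> {1..q}"
    have "t i \<le> (\<Sum>j\<in>{1..q}. t j)" using i by (intro member_le_sum) auto
    then show "t i \<in> {0..n}" using t by (simp add: Nset_def)
  qed (auto simp: Nset_def)
  then show ?thesis by (rule finite_subset) (intro finite_set_of_finite_funs; simp)
qed

lemma Nset_0: "Nset q 0 = {\<lambda>_. 0}"
  by (auto simp: Nset_def fun_eq_iff) (metis atLeastAtMost_iff)

lemma Nset_fun_upd_decr:
  assumes "t \<in> Nset q (Suc n)" "c \<in> {1..q}" "0 < t c"
  shows "t(c := t c - 1) \<in> Nset q n"
  using assms sum.remove[of "{1..q}" c t] by (auto simp: Nset_def sum.remove)

lemma Nset_fun_upd_incr:
  assumes "s \<in> Nset q n" "c \<in> {1..q}"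
  shows "s(c := Suc (s c)) \<in> Nset q (Suc n)"
  using assms sum.remove[of "{1..q}" c s] by (auto simp: Nset_def sum.remove)

lemma sum_shift_eval:
  assumes c: "c \<in> {1..q}"
  shows "(\<Sum>t\<in>Nset q (Suc n). shift_eval q n Q c t * g t)
       = (\<Sum>s\<in>Nset q n. Q s * g (s(c := Suc (s c))))"
proof -
  let ?T = "{t \<in> Nset q (Suc n). 0 < t c}"
  have "(\<Sum>t\<in>Nset q (Suc n). shift_eval q n Q c t * g t) = (\<Sum>t\<in>?T. shift_eval q n Q c t * g t)"
    by (rule sum.mono_neutral_right) (auto simp: finite_Nset shift_eval_def)
  also have "\<dots> = (\<Sum>s\<in>Nset q n. Q s * g (s(c := Suc (s c))))"
    by (rule sum.reindex_bij_witness[where j = "\<lambda>t. t(c := t c - 1)" and i = "\<lambda>s. s(c := Suc (s c))"])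
       (use Nset_fun_upd_decr[OF _ c] Nset_fun_upd_incr[OF _ c] in \<open>auto simp: shift_eval_def\<close>)
  finally show ?thesis .
qed

lemma multinomial_dist_nonneg:
  assumes "\<forall>i\<in>{1..q}. u i \<ge> 0"
  shows "multinomial_dist q n u t \<ge> 0"
  using assms
  by (auto simp: multinomial_dist_def intro!: mult_nonneg_nonneg divide_nonneg_nonneg prod_nonneg)

lemma multinomial_dist_Suc_mult_coord:
  assumes t: "t \<in> Nset q (Suc n)" and c: "c \<in> {1..q}"
  shows "multinomial_dist q (Suc n) u t * t c
       = real (Suc n) * u c * shift_eval q n (multinomial_dist q n u) c t"
proof (cases "t c = 0")
  case True
  then show ?thesis by (simp add: shift_eval_def)
next
  case False
  define s where "s = t(c := t c - 1)"
  have s: "s \<in> Nset q n" using Nset_fun_upd_decr[OF t c] False by (simp add: s_def)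
  have tc: "t c = Suc (s c)" using False by (simp add: s_def)
  have prod_split: "(\<Prod>i\<in>{1..q}. f (t i)) = f (t c) * (\<Prod>i\<in>{1..q}-{c}. f (s i))"
    "(\<Prod>i\<in>{1..q}. f (s i)) = f (s c) * (\<Prod>i\<in>{1..q}-{c}. f (s i))"
    for f :: "nat \<Rightarrow> real"
    using c by (simp_all add: prod.remove s_def)
  have split_pow: "(\<Prod>i\<in>{1..q}. u i ^ t i) = u c ^ t c * (\<Prod>i\<in>{1..q}-{c}. u i ^ s i)"
    "(\<Prod>i\<in>{1..q}. u i ^ s i) = u c ^ s c * (\<Prod>i\<in>{1..q}-{c}. u i ^ s i)"
    using c by (simp_all add: prod.remove s_def)
  have "(\<Prod>i\<in>{1..q}-{c}. fact (s i)) > (0::real)" by (intro prod_pos) auto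
  then have "multinomial_dist q (Suc n) u t * t c = real (Suc n) * u c * multinomial_dist q n u s"
    using t s unfolding multinomial_dist_def prod_split[of fact] split_pow tc
    by (simp add: field_simps del: of_nat_Suc)
  then show ?thesis using s False by (simp add: shift_eval_def s_def)
qed

lemma sum_multinomial_dist_Suc_mult_coord:
  fixes g :: "(nat \<Rightarrow> nat) \<Rightarrow> real"
  assumes c: "c \<in> {1..q}"
  shows "(\<Sum>t\<in>Nset q (Suc n). multinomial_dist q (Suc n) u t * (t c * g t))
       = real (Suc n) * u c * (\<Sum>s\<in>Nset q n. multinomial_dist q n u s * g (s(c := Suc (s c))))"
proof -
  have "(\<Sum>t\<in>Nset q (Suc n). multinomial_dist q (Suc n) u t * (t c * g t))
      = (\<Sum>t\<in>Nset q (Suc n). real (Suc n) * u c * (shift_eval q n (multinomial_dist q n u) c t * g t))"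
  proof (rule sum.cong[OF refl])
    fix t assume "t \<in> Nset q (Suc n)"
    from multinomial_dist_Suc_mult_coord[OF this c, of u]
    show "multinomial_dist q (Suc n) u t * (t c * g t)
        = real (Suc n) * u c * (shift_eval q n (multinomial_dist q n u) c t * g t)"
      by (simp only: mult.assoc [symmetric])
  qed
  also have "\<dots> = real (Suc n) * u c * (\<Sum>s\<in>Nset q n. multinomial_dist q n u s * g (s(c := Suc (s c))))"
    by (simp add: sum_shift_eval[OF c] flip: sum_distrib_left del: of_nat_Suc)
  finally show ?thesis .
qed

lemma sum_multinomial_dist: "(\<Sum>t\<in>Nset q n. multinomial_dist q n u t) = (\<Sum>i\<in>{1..q}. u i) ^ n"
proof (induction n)
  case 0
  show ?case by (simp add: Nset_0 multinomial_dist_def)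
next
  case (Suc n)
  let ?M = "multinomial_dist q (Suc n) u"
  have "real (Suc n) * (\<Sum>t\<in>Nset q (Suc n). ?M t) = (\<Sum>t\<in>Nset q (Suc n). real (Suc n) * ?M t)"
    by (rule sum_distrib_left)
  also have "\<dots> = (\<Sum>t\<in>Nset q (Suc n). ?M t * (\<Sum>c\<in>{1..q}. real (t c) * 1))"
  proof (rule sum.cong[OF refl])
    fix t assume "t \<in> Nset q (Suc n)"
    then have "(\<Sum>c\<in>{1..q}. real (t c) * 1) = real (Suc n)"
      by (simp add: Nset_def flip: of_nat_sum)
    then show "real (Suc n) * ?M t = ?M t * (\<Sum>c\<in>{1..q}. real (t c) * 1)"
      by simp
  qed
  also have "\<dots> = (\<Sum>c\<in>{1..q}. \<Sum>t\<in>Nset q (Suc n). ?M t * (real (t c) * 1))"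
    unfolding sum_distrib_left by (rule sum.swap)
  also have "\<dots> = (\<Sum>c\<in>{1..q}. real (Suc n) * u c * (\<Sum>i\<in>{1..q}. u i) ^ n)"
    by (rule sum.cong[OF refl]) (subst sum_multinomial_dist_Suc_mult_coord; simp add: Suc.IH)
  also have "\<dots> = real (Suc n) * (\<Sum>i\<in>{1..q}. u i) ^ Suc n"
    by (simp add: sum_distrib_left sum_distrib_right mult_ac del: of_nat_Suc)
  finally show ?case by (subst (asm) mult_left_cancel) auto
qed

corollary sum_multinomial_dist_eq_1:
  assumes "(\<Sum>i\<in>{1..q}. u i) = 1"
  shows "(\<Sum>t\<in>Nset q n. multinomial_dist q n u t) = 1"
  using assms by (simp add: sum_multinomial_dist)

lemma multinomial_mean:
  assumes u: "(\<Sum>i\<in>{1..q}. u i) = 1" and c: "c \<in> {1..q}"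
  shows "(\<Sum>t\<in>Nset q n. multinomial_dist q n u t * t c) = real n * u c"
proof (cases n)
  case (Suc m)
  then show ?thesis
    using sum_multinomial_dist_Suc_mult_coord[OF c, of m u "\<lambda>_. 1"]
    by (simp add: sum_multinomial_dist_eq_1[OF u])
qed (simp add: Nset_0)

lemma multinomial_second_moment:
  assumes u: "(\<Sum>i\<in>{1..q}. u i) = 1" and c: "c \<in> {1..q}"
  shows "(\<Sum>t\<in>Nset q n. multinomial_dist q n u t * real (t c) ^ 2)
       = real n * u c * ((real n - 1) * u c + 1)"
proof (cases n)
  case (Suc m)
  have "(\<Sum>s\<in>Nset q m. multinomial_dist q m u s * real ((s(c := Suc (s c))) c))
      = (\<Sum>s\<in>Nset q m. multinomial_dist q m u s * s c + multinomial_dist q m u s)"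
    by (simp add: algebra_simps)
  also have "\<dots> = real m * u c + 1"
    by (simp add: sum.distrib multinomial_mean[OF u c] sum_multinomial_dist_eq_1[OF u])
  finally show ?thesis
    using sum_multinomial_dist_Suc_mult_coord[OF c, of m u "\<lambda>t. real (t c)"] Suc
    by (simp add: power2_eq_square)
qed (simp add: Nset_0)

lemma multinomial_mixed_moment:
  assumes u: "(\<Sum>i\<in>{1..q}. u i) = 1" and a: "a \<in> {1..q}" and b: "b \<in> {1..q}" and "a \<noteq> b"
  shows "(\<Sum>t\<in>Nset q n. multinomial_dist q n u t * (real (t a) * real (t b)))
       = real n * (real n - 1) * u a * u b"
proof (cases n)
  case (Suc m)
  have "(\<Sum>s\<in>Nset q m. multinomial_dist q m u s * real ((s(b := Suc (s b))) a)) = real m * u a"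
    using \<open>a \<noteq> b\<close> by (simp add: multinomial_mean[OF u a])
  then show ?thesis
    using sum_multinomial_dist_Suc_mult_coord[OF b, of m u "\<lambda>t. real (t a)"] Suc
    by (simp add: mult.commute)
qed (simp add: Nset_0)

lemma multinomial_variance_of_ratio_difference:
  assumes u: "(\<Sum>i\<in>{1..q}. u i) = 1" and a: "a \<in> {1..q}" and b: "b \<in> {1..q}" and "a \<noteq> b"
    and "u a > 0" "u b > 0" "n > 0"
  shows "(\<Sum>t\<in>Nset q n. multinomial_dist q n u t * (t b / (n * u b) - t a / (n * u a))\<^sup>2)
       = (1 / u a + 1 / u b) / n"
proof -
  let ?M = "multinomial_dist q n u"
  have expand: "m * (x / A - y / B)\<^sup>2 = (m * x\<^sup>2) / A\<^sup>2 + (m * y\<^sup>2) / B\<^sup>2 - 2 * (m * (y * x)) / (A * B)"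
    for m x y A B :: real
    by (simp add: divide_inverse power2_eq_square algebra_simps)
  have "(\<Sum>t\<in>Nset q n. ?M t * (t b / (n * u b) - t a / (n * u a))\<^sup>2)
      = (\<Sum>t\<in>Nset q n. ?M t * real (t b) ^ 2) / (n * u b) ^ 2
        + (\<Sum>t\<in>Nset q n. ?M t * real (t a) ^ 2) / (n * u a) ^ 2
        - 2 * (\<Sum>t\<in>Nset q n. ?M t * (real (t a) * real (t b))) / (n * u b * (n * u a))"
    unfolding expand by (simp only: sum.distrib sum_subtractf sum_divide_distrib sum_distrib_left)
  also have "\<dots> = (n * u b * ((real n - 1) * u b + 1)) / (n * u b) ^ 2
           + (n * u a * ((real n - 1) * u a + 1)) / (n * u a) ^ 2
           - 2 * (n * (real n - 1) * u a * u b) / (n * u b * (n * u a))"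
    by (simp only: multinomial_second_moment[OF u a] multinomial_second_moment[OF u b]
        multinomial_mixed_moment[OF u a b \<open>a \<noteq> b\<close>])
  also have "\<dots> = (1 / u a + 1 / u b) / n"
    using assms(5-7) by (simp add: field_simps power2_eq_square)
  finally show ?thesis .
qed

lemma sum_weighted_abs_le_sqrt:
  fixes w f :: "'a \<Rightarrow> real"
  assumes "\<forall>x\<in>A. w x \<ge> 0" "sum w A = 1"
  shows "(\<Sum>x\<in>A. w x * \<bar>f x\<bar>) \<le> sqrt (\<Sum>x\<in>A. w x * (f x)\<^sup>2)"
proof (rule real_le_rsqrt)
  have "(\<Sum>x\<in>A. sqrt (w x) * (sqrt (w x) * \<bar>f x\<bar>))\<^sup>2
      \<le> (\<Sum>x\<in>A. (sqrt (w x))\<^sup>2) * (\<Sum>x\<in>A. (sqrt (w x) * \<bar>f x\<bar>)\<^sup>2)"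
    by (rule Cauchy_Schwarz_ineq_sum)
  then show "(\<Sum>x\<in>A. w x * \<bar>f x\<bar>)\<^sup>2 \<le> (\<Sum>x\<in>A. w x * (f x)\<^sup>2)"
    using assms by (simp add: power_mult_distrib flip: mult.assoc cong: sum.cong)
qed

lemma Dab_multinomial_eq_expectation:
  fixes u :: "nat \<Rightarrow> real"
  assumes "\<forall>i\<in>{1..q}. u i \<ge> 0" "a \<in> {1..q}" "b \<in> {1..q}" "u a > 0" "u b > 0"
  shows "Dab q n a b (multinomial_dist q n u)
       = (\<Sum>t\<in>Nset q (Suc n). multinomial_dist q (Suc n) u t
            * \<bar>t b / (real (Suc n) * u b) - t a / (real (Suc n) * u a)\<bar>)"
  unfolding Dab_def Suc_eq_plus1[symmetric]
proof (rule sum.cong[OF refl])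
  fix t assume t: "t \<in> Nset q (Suc n)"
  let ?M = "multinomial_dist q (Suc n) u"
  have shift: "shift_eval q n (multinomial_dist q n u) c t = ?M t * (t c / (real (Suc n) * u c))"
    if "c \<in> {1..q}" "u c > 0" for c
    using multinomial_dist_Suc_mult_coord[OF t that(1), of u] that(2)
    by (simp add: field_simps del: of_nat_Suc)
  have "shift_eval q n (multinomial_dist q n u) b t - shift_eval q n (multinomial_dist q n u) a t
      = ?M t * (t b / (real (Suc n) * u b) - t a / (real (Suc n) * u a))"
    unfolding shift[OF assms(3,5)] shift[OF assms(2,4)] by (rule right_diff_distrib[symmetric])
  then show "\<bar>shift_eval q n (multinomial_dist q n u) b t - shift_eval q n (multinomial_dist q n u) a t\<bar>
      = ?M t * \<bar>t b / (real (Suc n) * u b) - t a / (real (Suc n) * u a)\<bar>"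
    by (simp only: abs_mult abs_of_nonneg[OF multinomial_dist_nonneg[OF assms(1)]])
qed

lemma Dab_multinomial_le:
  assumes "\<forall>i\<in>{1..q}. u i \<ge> 0" "(\<Sum>i\<in>{1..q}. u i) = 1"
    "a \<in> {1..q}" "b \<in> {1..q}" "a \<noteq> b" "u a > 0" "u b > 0"
  shows "Dab q n a b (multinomial_dist q n u) \<le> sqrt ((1 / u a + 1 / u b) / real (Suc n))"
proof -
  let ?M = "multinomial_dist q (Suc n) u"
  have "Dab q n a b (multinomial_dist q n u)
      = (\<Sum>t\<in>Nset q (Suc n). ?M t * \<bar>t b / (real (Suc n) * u b) - t a / (real (Suc n) * u a)\<bar>)"
    by (rule Dab_multinomial_eq_expectation[OF assms(1,3,4,6,7)])
  also have "\<dots> \<le> sqrt (\<Sum>t\<in>Nset q (Suc n).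
                         ?M t * (t b / (real (Suc n) * u b) - t a / (real (Suc n) * u a))\<^sup>2)"
    using multinomial_dist_nonneg[OF assms(1)] sum_multinomial_dist_eq_1[OF assms(2)]
    by (intro sum_weighted_abs_le_sqrt) auto
  also have "\<dots> = sqrt ((1 / u a + 1 / u b) / real (Suc n))"
    using multinomial_variance_of_ratio_difference[OF assms(2-7), of "Suc n"] by simp
  finally show ?thesis .
qed

lemma multinomial_dist_eq_0:
  assumes "i \<in> {1..q}" "u i = 0" "s i > 0"
  shows "multinomial_dist q n u s = 0"
proof -
  have "(\<Prod>j\<in>{1..q}. u j ^ s j) = 0"
    using assms by (intro prod_zero) (auto intro!: bexI[of _ i])
  then show ?thesis by (simp add: multinomial_dist_def)
qed

lemma sum_shift_eval_multinomial:
  assumes "(\<Sum>i\<in>{1..q}. u i) = 1" "c \<in> {1..q}"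
  shows "(\<Sum>t\<in>Nset q (Suc n). shift_eval q n (multinomial_dist q n u) c t) = 1"
  using sum_shift_eval[OF assms(2), of n "multinomial_dist q n u" "\<lambda>_. 1"]
  by (simp add: sum_multinomial_dist_eq_1[OF assms(1)])

lemma Dab_commute: "Dab q n a b Q = Dab q n b a Q"
  unfolding Dab_def by (simp add: abs_minus_commute)

lemma Dab_multinomial_eq_2_if_zero:
  assumes "\<forall>i\<in>{1..q}. u i \<ge> 0" "(\<Sum>i\<in>{1..q}. u i) = 1"
    and a: "a \<in> {1..q}" and b: "b \<in> {1..q}" and "a \<noteq> b" "u a = 0"
  shows "Dab q n a b (multinomial_dist q n u) = 2"
proof -
  let ?S = "shift_eval q n (multinomial_dist q n u)"
  have disjoint: "?S a t = 0 \<or> ?S b t = 0" for t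
  proof (rule ccontr)
    assume "\<not> ?thesis"
    then have "multinomial_dist q n u (t(a := t a - 1)) \<noteq> 0"
      and "multinomial_dist q n u (t(b := t b - 1)) \<noteq> 0" and "t a \<ge> 1"
      by (auto simp: shift_eval_def split: if_splits)
    then show False
      using multinomial_dist_eq_0[where i = a and u = u, OF a \<open>u a = 0\<close>] \<open>a \<noteq> b\<close> by force
  qed
  have "Dab q n a b (multinomial_dist q n u) = (\<Sum>t\<in>Nset q (Suc n). ?S b t + ?S a t)"
    unfolding Dab_def Suc_eq_plus1[symmetric]
  proof (rule sum.cong[OF refl])
    fix t
    have "?S c t \<ge> 0" for c
      by (simp add: shift_eval_def multinomial_dist_nonneg[OF assms(1)])
    then show "\<bar>?S b t - ?S a t\<bar> = ?S b t + ?S a t"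
      using disjoint[of t] by auto
  qed
  also have "\<dots> = 2"
    using sum_shift_eval_multinomial[OF assms(2) a] sum_shift_eval_multinomial[OF assms(2) b]
    by (simp add: sum.distrib)
  finally show ?thesis .
qed

corollary Dab_multinomial_eq_2:
  assumes "\<forall>i\<in>{1..q}. u i \<ge> 0" "(\<Sum>i\<in>{1..q}. u i) = 1"
    "a \<in> {1..q}" "b \<in> {1..q}" "a \<noteq> b" "u a = 0 \<or> u b = 0"
  shows "Dab q n a b (multinomial_dist q n u) = 2"
  using assms(6)
proof
  assume "u a = 0"
  then show ?thesis by (rule Dab_multinomial_eq_2_if_zero[OF assms(1-5)])
next
  assume "u b = 0"
  then show ?thesis
    unfolding Dab_commute[of q n a b]
    by (rule Dab_multinomial_eq_2_if_zero[OF assms(1,2,4,3) not_sym[OF assms(5)]])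
qed

lemma two_le_card_supp:
  assumes "a \<in> supp q u" "b \<in> supp q u" "a \<noteq> b"
  shows "2 \<le> card (supp q u)"
proof -
  have "card {a, b} \<le> card (supp q u)"
    using assms by (intro card_mono) (auto simp: supp_def)
  then show ?thesis using assms(3) by simp
qed

lemma sqrt_div_Suc_le_log_powr:
  fixes K k :: real
  assumes "n \<ge> 2" "K \<ge> 0" "k \<ge> 2"
  shows "sqrt (K / real (Suc n)) \<le> sqrt K * log 2 n powr ((k - 2) / 2) / sqrt n"
proof -
  have "sqrt (K / real (Suc n)) \<le> sqrt K / sqrt n"
    using assms(1,2) by (simp add: real_sqrt_divide divide_left_mono)
  also have "\<dots> \<le> sqrt K * log 2 n powr ((k - 2) / 2) / sqrt n"
  proof -
    have "1 \<le> log 2 n powr ((k - 2) / 2)"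
      using assms by (intro ge_one_powr_ge_zero) auto
    then show ?thesis
      using mult_left_mono[of 1 "log 2 n powr ((k - 2) / 2)" "sqrt K"] assms(2)
      by (intro divide_right_mono) auto
  qed
  finally show ?thesis .
qed

theorem lemma3:
  fixes q :: nat and u :: "nat \<Rightarrow> real" and a b :: nat
  assumes "q \<ge> 2"
    and "\<forall>i\<in>{1..q}. u i \<ge> 0" and "(\<Sum>i\<in>{1..q}. u i) = 1"
    and "a \<in> {1..q}" and "b \<in> {1..q}" and "a \<noteq> b"
  shows "\<exists>C1 :: real. \<exists>N :: nat. \<forall>n\<ge>N.
     ((a \<notin> supp q u \<or> b \<notin> supp q u) \<longrightarrow>
        Dab q n a b (multinomial_dist q n u) = 2) \<and>
     ((a \<in> supp q u \<and> b \<in> supp q u) \<longrightarrow>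
        Dab q n a b (multinomial_dist q n u)
          \<le> C1 * (log 2 (real n)) powr ((real (card (supp q u)) - 2) / 2) / sqrt (real n)) \<and>
     ((\<forall>i\<in>{1..q}. u i > 0) \<longrightarrow>
        Dab q n a b (multinomial_dist q n u)
          \<le> C1 * (log 2 (real n)) powr ((real q - 2) / 2) / sqrt (real n))"
proof -
  define K where "K = 1 / u a + 1 / u b"
  have bound: "Dab q n a b (multinomial_dist q n u) \<le> sqrt K * log 2 n powr ((real k - 2) / 2) / sqrt n"
    if "a \<in> supp q u" "b \<in> supp q u" "n \<ge> 2" "k \<ge> 2" for n k
  proof -
    have pos: "u a > 0" "u b > 0" using that by (auto simp: supp_def)
    then have "Dab q n a b (multinomial_dist q n u) \<le> sqrt (K / real (Suc n))"
      unfolding K_def by (rule Dab_multinomial_le[OF assms(2-6)])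
    also have "\<dots> \<le> sqrt K * log 2 n powr ((real k - 2) / 2) / sqrt n"
      using pos that by (intro sqrt_div_Suc_le_log_powr) (auto simp: K_def)
    finally show ?thesis .
  qed
  have "u a = 0 \<or> u b = 0" if "a \<notin> supp q u \<or> b \<notin> supp q u"
    using that assms(2,4,5) by (force simp: supp_def)
  moreover have "a \<in> supp q u \<and> b \<in> supp q u" if "\<forall>i\<in>{1..q}. u i > 0"
    using that assms(4,5) by (auto simp: supp_def)
  ultimately show ?thesis
    using Dab_multinomial_eq_2[OF assms(2-6)] bound two_le_card_supp[OF _ _ assms(6)] assms(1)
    by (intro exI[of _ "sqrt K"] exI[of _ 2]) blast
qed

end
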